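(* Let $T$ be a $J$-unitary operator on ${\cal K}$. Then $$\Re e\,V(T)=({\bf 1}+T)\bigl({\bf 1}+T^*T\bigr)^{-1}({\bf 1}+T)^*-{\bf 1},$$ where $\Re e\,V(T)=\tfrac12(V(T)+V(T)^* )$.
   Context: ${\cal H}$ is a separable complex Hilbert space, ${\cal K}={\cal H}\oplus{\cal H}$, $J=\begin{pmatrix}{\bf 1}&0\\0&-{\bf 1}\end{pmatrix}$. A bounded invertible $T$ on ${\cal K}$ is $J$-unitary if $T^*JT=J$; writing $T=\begin{pmatrix}a&b\\c&d\end{pmatrix}$ the blocks $a,d$ are invertible. $V(T)$ denotes the unitary $\begin{pmatrix}(a^* )^{-1}&bd^{-1}\\-d^{-1}c&d^{-1}\end{pmatrix}$. *)

theory Defs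
  imports "HOL-Analysis.Analysis"
begin

text \<open>A complex inner product space is encoded as a real inner product space together
with a complex scalar multiplication extending the real one, for which multiplication by
the imaginary unit is isometric. The complex inner product (linear in the first argument)
is then recovered as below; its real part is the real inner product.\<close>

class complex_inner = real_inner +
  fixes scaleC :: "complex \<Rightarrow> 'a \<Rightarrow> 'a"
  assumes scaleC_add_right: "scaleC a (x + y) = scaleC a x + scaleC a y"
    and scaleC_add_left: "scaleC (a + b) x = scaleC a x + scaleC b x"
    and scaleC_scaleC: "scaleC a (scaleC b x) = scaleC (a * b) x"
    and scaleC_one: "scaleC 1 x = x"
    and scaleR_scaleC: "scaleR r x = scaleC (complex_of_real r) x"
    and inner_scaleC_ii: "inner (scaleC \<i> x) (scaleC \<i> y) = inner x y"

class chilbert_space = complex_inner + complete_space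

definition cinner :: "'a::complex_inner \<Rightarrow> 'a \<Rightarrow> complex" where
  "cinner x y = Complex (inner x y) (inner x (scaleC \<i> y))"

definition bounded_clinear_op :: "('a::complex_inner \<Rightarrow> 'a) \<Rightarrow> bool" where
  "bounded_clinear_op f \<longleftrightarrow> bounded_linear f \<and> (\<forall>c x. f (scaleC c x) = scaleC c (f x))"

definition adjH :: "('a::complex_inner \<Rightarrow> 'a) \<Rightarrow> ('a \<Rightarrow> 'a)" where
  "adjH A = (THE B. \<forall>x y. cinner (B x) y = cinner x (A y))"

definition scaleK :: "complex \<Rightarrow> 'a::complex_inner \<times> 'a \<Rightarrow> 'a \<times> 'a" where
  "scaleK c p = (scaleC c (fst p), scaleC c (snd p))"

definition cinnerK :: "'a::complex_inner \<times> 'a \<Rightarrow> 'a \<times> 'a \<Rightarrow> complex" where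
  "cinnerK p q = cinner (fst p) (fst q) + cinner (snd p) (snd q)"

definition bounded_clinear_opK :: "('a::complex_inner \<times> 'a \<Rightarrow> 'a \<times> 'a) \<Rightarrow> bool" where
  "bounded_clinear_opK T \<longleftrightarrow> bounded_linear T \<and> (\<forall>c p. T (scaleK c p) = scaleK c (T p))"

definition adjK :: "('a::complex_inner \<times> 'a \<Rightarrow> 'a \<times> 'a) \<Rightarrow> ('a \<times> 'a \<Rightarrow> 'a \<times> 'a)" where
  "adjK T = (THE S. \<forall>p q. cinnerK (S p) q = cinnerK p (T q))"

definition Jop :: "'a::complex_inner \<times> 'a \<Rightarrow> 'a \<times> 'a" where
  "Jop p = (fst p, - snd p)"

definition J_unitary :: "('a::complex_inner \<times> 'a \<Rightarrow> 'a \<times> 'a) \<Rightarrow> bool" where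
  "J_unitary T \<longleftrightarrow> bounded_clinear_opK T \<and> bij T \<and> adjK T \<circ> Jop \<circ> T = Jop"

text \<open>Block entries of an operator on \<open>K\<close>: \<open>T = [[a, b], [c, d]]\<close>.\<close>

definition blk_a :: "('a::complex_inner \<times> 'a \<Rightarrow> 'a \<times> 'a) \<Rightarrow> 'a \<Rightarrow> 'a" where
  "blk_a T x = fst (T (x, 0))"
definition blk_b :: "('a::complex_inner \<times> 'a \<Rightarrow> 'a \<times> 'a) \<Rightarrow> 'a \<Rightarrow> 'a" where
  "blk_b T y = fst (T (0, y))"
definition blk_c :: "('a::complex_inner \<times> 'a \<Rightarrow> 'a \<times> 'a) \<Rightarrow> 'a \<Rightarrow> 'a" where
  "blk_c T x = snd (T (x, 0))"
definition blk_d :: "('a::complex_inner \<times> 'a \<Rightarrow> 'a \<times> 'a) \<Rightarrow> 'a \<Rightarrow> 'a" where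
  "blk_d T y = snd (T (0, y))"

definition Vop :: "('a::complex_inner \<times> 'a \<Rightarrow> 'a \<times> 'a) \<Rightarrow> 'a \<times> 'a \<Rightarrow> 'a \<times> 'a" where
  "Vop T p =
     (let a = blk_a T; b = blk_b T; c = blk_c T; d = blk_d T
      in (inv (adjH a) (fst p) + b (inv d (snd p)),
          - inv d (c (fst p)) + inv d (snd p)))"

definition ReK :: "('a::complex_inner \<times> 'a \<Rightarrow> 'a \<times> 'a) \<Rightarrow> 'a \<times> 'a \<Rightarrow> 'a \<times> 'a" where
  "ReK A p = scaleR (1/2) (A p + adjK A p)"

end

theory Submission
  imports Defs
begin

text \<open>Let \<open>M x = (x\<^sub>1, (T x)\<^sub>2)\<close>. Since \<open>T\<^sup>* J T = J\<close>, the diagonal blocks \<open>a\<close>, \<open>d\<close> of \<open>T\<close> and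
  of \<open>T\<^sup>*\<close> are bounded below, so \<open>d\<close> and \<open>M\<close> are invertible and \<open>a\<close> is onto. The operator
  \<open>V = V(T)\<close> satisfies \<open>V (M x) = ((T x)\<^sub>1, x\<^sub>2)\<close>; as \<open>T\<close> preserves the indefinite form
  \<open>\<parallel>x\<^sub>1\<parallel>\<^sup>2 - \<parallel>x\<^sub>2\<parallel>\<^sup>2\<close>, \<open>V\<close> is isometric, and it is onto, hence unitary. Now
  \<open>1 + T = (1 + V) M\<close> and \<open>1 + T\<^sup>* T = 2 M\<^sup>* M\<close>, so
  \<open>(1 + T) (1 + T\<^sup>* T)\<^sup>-\<^sup>1 (1 + T)\<^sup>* = (1 + V) (1 + V\<^sup>*) / 2 = 1 + Re V\<close>.\<close>

section \<open>Minimisers of uniformly convex functionals\<close>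

lemma linear_coeff_eq_0_if_quadratic_nonneg:
  fixes b A :: real
  assumes nonneg: "\<And>t. 0 \<le> t * b + t\<^sup>2 * A"
  shows "b = 0"
proof -
  define a where "a = \<bar>A\<bar>"
  have "a \<ge> 0" unfolding a_def by simp
  define t where "t = - b / (a + 1)"
  have "t * b + t\<^sup>2 * A \<le> t * b + t\<^sup>2 * a"
    unfolding a_def by (simp add: mult_left_mono)
  also have "\<dots> = - b\<^sup>2 / (a + 1)\<^sup>2"
    using \<open>a \<ge> 0\<close> unfolding t_def by (simp add: divide_simps power2_eq_square) (simp add: algebra_simps)
  finally have "b\<^sup>2 / (a + 1)\<^sup>2 \<le> 0" using nonneg[of t] by linarith
  then show "b = 0" using \<open>a \<ge> 0\<close> by (smt (verit) divide_pos_pos zero_less_power2)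
qed

lemma uniformly_convex_minimizing_seq_Cauchy:
  fixes \<phi> :: "'a::real_normed_vector \<Rightarrow> real"
  assumes convex: "\<And>x y. norm (x - y)^2 \<le> 4 * (\<phi> x + \<phi> y - 2 * \<phi> (midpoint x y))"
    and lower: "\<And>x. m \<le> \<phi> x"
    and minimizing: "\<And>n. \<phi> (X n) < m + inverse (real (Suc n))"
  shows "Cauchy X"
proof (rule CauchyI)
  fix e :: real assume "0 < e"
  obtain N :: nat where N: "8 / e^2 < real N" using reals_Archimedean2 by blast
  with \<open>0 < e\<close> have "0 < real N" by (smt (verit) divide_pos_pos zero_less_power)
  have "norm (X k - X l) < e" if "N \<le> k" "N \<le> l" for k l
  proof -
    have "inverse (real (Suc k)) \<le> inverse (real N)" "inverse (real (Suc l)) \<le> inverse (real N)"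
      using that \<open>0 < real N\<close> by (auto intro!: le_imp_inverse_le)
    then have "norm (X k - X l)^2 < 8 / real N"
      using convex[of "X k" "X l"] lower[of "midpoint (X k) (X l)"] minimizing[of k] minimizing[of l]
      by (simp add: divide_inverse)
    also have "8 / real N < e^2" using N \<open>0 < real N\<close> \<open>0 < e\<close> by (simp add: field_simps)
    finally show ?thesis using \<open>0 < e\<close> by (smt (verit) power_mono norm_ge_zero)
  qed
  then show "\<exists>M. \<forall>k\<ge>M. \<forall>l\<ge>M. norm (X k - X l) < e" by blast
qed

lemma uniformly_convex_attains_Inf:
  fixes \<phi> :: "'a::{real_normed_vector,complete_space} \<Rightarrow> real"
  assumes cont: "continuous_on UNIV \<phi>" and bdd: "bdd_below (range \<phi>)"
    and convex: "\<And>x y. norm (x - y)^2 \<le> 4 * (\<phi> x + \<phi> y - 2 * \<phi> (midpoint x y))"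
  shows "\<exists>z. \<forall>x. \<phi> z \<le> \<phi> x"
proof -
  define m where "m = Inf (range \<phi>)"
  have lower: "m \<le> \<phi> x" for x unfolding m_def by (rule cInf_lower[OF _ bdd]) simp
  have "\<exists>x. \<phi> x < m + inverse (real (Suc n))" for n
    using cInf_lessD[of "range \<phi>" "m + inverse (real (Suc n))"] unfolding m_def by auto
  then obtain X where minimizing: "\<And>n. \<phi> (X n) < m + inverse (real (Suc n))" by metis
  have "Cauchy X" by (rule uniformly_convex_minimizing_seq_Cauchy[OF convex lower minimizing])
  then obtain z where "X \<longlonglongrightarrow> z" using Cauchy_convergent_iff convergent_def by blast
  moreover have "isCont \<phi> z" using cont by (simp add: continuous_on_eq_continuous_at)
  ultimately have "(\<lambda>n. \<phi> (X n)) \<longlonglongrightarrow> \<phi> z" by (simp add: isCont_tendsto_compose)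
  moreover have "(\<lambda>n. \<phi> (X n)) \<longlonglongrightarrow> m"
  proof (rule tendsto_sandwich[of "\<lambda>n. m" _ _ "\<lambda>n. m + inverse (real (Suc n))"])
    show "\<forall>\<^sub>F n in sequentially. \<phi> (X n) \<le> m + inverse (real (Suc n))"
      using minimizing by (simp add: less_imp_le)
  qed (use lower LIMSEQ_inverse_real_of_nat_add in auto)
  ultimately have "\<phi> z = m" by (rule LIMSEQ_unique)
  then show ?thesis using lower by auto
qed

text \<open>Lax--Milgram for symmetric \<open>S\<close>: the representing vector minimises the energy
  \<open>\<langle>S x, x\<rangle>/2 - f x\<close>.\<close>

lemma symmetric_coercive_representation:
  fixes S :: "'a::{real_inner,complete_space} \<Rightarrow> 'a" and f :: "'a \<Rightarrow> real"
  assumes S: "bounded_linear S" and sym: "\<And>x y. inner (S x) y = inner x (S y)"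
    and coercive: "\<And>x. inner x x \<le> inner (S x) x" and f: "bounded_linear f"
  shows "\<exists>z. \<forall>h. inner (S z) h = f h"
proof -
  interpret S: bounded_linear S by fact
  interpret f: bounded_linear f by fact
  define q where "q x = inner (S x) x" for x
  define \<phi> where "\<phi> x = q x / 2 - f x" for x
  have q_ge: "(norm x)^2 \<le> q x" for x using coercive[of x] by (simp add: q_def dot_square_norm)
  have q_add: "q (x + y) = q x + 2 * inner (S x) y + q y" for x y
    unfolding q_def by (simp add: S.add inner_add_left inner_add_right sym[of y x] inner_commute[of x "S y"] inner_commute[of y "S x"])
  have q_scale: "q (t *\<^sub>R x) = t^2 * q x" for t x
    unfolding q_def by (simp add: S.scale power2_eq_square)
  have "continuous_on UNIV \<phi>"
    unfolding \<phi>_def q_def by (intro continuous_intros S.continuous_on f.continuous_on) auto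
  moreover have "bdd_below (range \<phi>)"
  proof -
    obtain K where K: "\<And>x. norm (f x) \<le> norm x * K" using f.bounded by blast
    have "- (K^2) / 2 \<le> \<phi> x" for x
    proof -
      have "f x \<le> norm x * K" using K[of x] by simp
      moreover have "0 \<le> (norm x - K)^2" by simp
      ultimately show ?thesis using q_ge[of x] unfolding \<phi>_def power2_eq_square
        by (simp add: algebra_simps)
    qed
    then show ?thesis by (intro bdd_belowI[of _ "- (K^2) / 2"]) auto
  qed
  moreover have "(norm (x - y))^2 \<le> 4 * (\<phi> x + \<phi> y - 2 * \<phi> (midpoint x y))" for x y
  proof -
    have "4 * (\<phi> x + \<phi> y - 2 * \<phi> (midpoint x y)) = q (x + (-1) *\<^sub>R y)"
      unfolding \<phi>_def midpoint_def q_add q_scale by (simp add: f.add f.scale f.neg field_simps power2_eq_square)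
    then show ?thesis using q_ge[of "x - y"] by simp
  qed
  ultimately obtain z where min: "\<And>x. \<phi> z \<le> \<phi> x" using uniformly_convex_attains_Inf by metis
  have "inner (S z) h - f h = 0" for h
  proof (rule linear_coeff_eq_0_if_quadratic_nonneg)
    fix t :: real
    have "\<phi> (z + t *\<^sub>R h) = \<phi> z + t * (inner (S z) h - f h) + t^2 * (q h / 2)"
      unfolding \<phi>_def q_add q_scale by (simp add: f.add f.scale field_simps power2_eq_square)
    then show "0 \<le> t * (inner (S z) h - f h) + t^2 * (q h / 2)" using min[of "z + t *\<^sub>R h"] by simp
  qed
  then show ?thesis by auto
qed

section \<open>Adjoints\<close>

text \<open>Adjoints are taken with respect to the real inner product \<open>Re \<langle>_, _\<rangle>\<close>; they exist for every
  bounded real-linear map, and for complex-linear maps they agree with \<open>adjH\<close> and \<open>adjK\<close>.\<close>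

definition radj :: "('a::real_inner \<Rightarrow> 'a) \<Rightarrow> 'a \<Rightarrow> 'a" where
  "radj A = (SOME B. \<forall>x y. inner (B x) y = inner x (A y))"

lemma inner_radj:
  fixes A :: "'a::{real_inner,complete_space} \<Rightarrow> 'a"
  assumes A: "bounded_linear A"
  shows "inner (radj A x) y = inner x (A y)"
proof -
  have "\<exists>z. \<forall>y. inner (id z) y = inner x (A y)" for x
    by (rule symmetric_coercive_representation)
      (auto intro: bounded_linear_ident bounded_linear_compose[OF bounded_linear_inner_right A])
  then have "\<exists>B. \<forall>x y. inner (B x) y = inner x (A y)" by (metis id_apply)
  from someI_ex[OF this] show ?thesis unfolding radj_def by blast
qed

lemma radj_eqI:
  fixes A :: "'a::{real_inner,complete_space} \<Rightarrow> 'a"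
  assumes "bounded_linear A" "\<And>y. inner u y = inner x (A y)"
  shows "radj A x = u"
proof -
  have "\<forall>y. inner (radj A x) y = inner u y" using assms by (simp add: inner_radj)
  then show ?thesis by (simp only: vector_eq_rdot)
qed

lemma bounded_linear_radj:
  fixes A :: "'a::{real_inner,complete_space} \<Rightarrow> 'a"
  assumes A: "bounded_linear A"
  shows "bounded_linear (radj A)"
proof -
  interpret A: bounded_linear A by fact
  obtain K where K: "\<And>x. norm (A x) \<le> norm x * K" "K > 0" using A.pos_bounded by blast
  show ?thesis
  proof (rule bounded_linear_intro)
    show "radj A (x + y) = radj A x + radj A y" for x y
      by (rule radj_eqI[OF A]) (simp add: inner_add_left inner_add_right inner_radj[OF A])
    show "radj A (r *\<^sub>R x) = r *\<^sub>R radj A x" for r x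
      by (rule radj_eqI[OF A]) (simp add: inner_radj[OF A])
    show "norm (radj A x) \<le> norm x * K" for x
    proof -
      have "norm (radj A x) ^ 2 = inner x (A (radj A x))" by (simp add: inner_radj[OF A] power2_norm_eq_inner)
      also have "\<dots> \<le> norm x * norm (A (radj A x))" by (rule norm_cauchy_schwarz)
      also have "\<dots> \<le> norm x * (norm (radj A x) * K)" using K(1) by (simp add: mult_left_mono)
      finally have "norm (radj A x) * norm (radj A x) \<le> (norm x * K) * norm (radj A x)"
        by (simp add: power2_eq_square algebra_simps)
      then show ?thesis using K(2) by (cases "norm (radj A x) = 0") (auto simp: mult_le_cancel_right)
    qed
  qed
qed

lemma radj_radj:
  fixes A :: "'a::{real_inner,complete_space} \<Rightarrow> 'a"
  assumes A: "bounded_linear A"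
  shows "radj (radj A) = A"
  by (rule ext, rule radj_eqI[OF bounded_linear_radj[OF A]]) (metis inner_radj[OF A] inner_commute)

lemma radj_add:
  fixes A B :: "'a::{real_inner,complete_space} \<Rightarrow> 'a"
  assumes A: "bounded_linear A" and B: "bounded_linear B"
  shows "radj (\<lambda>x. A x + B x) = (\<lambda>x. radj A x + radj B x)"
  by (rule ext, rule radj_eqI)
    (simp_all add: bounded_linear_add A B inner_add_left inner_add_right inner_radj)

lemma radj_comp:
  fixes A B :: "'a::{real_inner,complete_space} \<Rightarrow> 'a"
  assumes A: "bounded_linear A" and B: "bounded_linear B"
  shows "radj (\<lambda>x. A (B x)) = (\<lambda>x. radj B (radj A x))"
  by (rule ext, rule radj_eqI[OF bounded_linear_compose[OF A B]]) (simp add: A B inner_radj)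

lemma surj_radj_if_bounded_below:
  fixes A :: "'a::{real_inner,complete_space} \<Rightarrow> 'a"
  assumes A: "bounded_linear A" and below: "\<And>x. norm x \<le> norm (A x)"
  shows "surj (radj A)"
proof -
  have "\<exists>z. y = radj A (A z)" for y
  proof -
    have "\<exists>z. \<forall>h. inner ((radj A \<circ> A) z) h = inner y h"
    proof (rule symmetric_coercive_representation)
      show "bounded_linear (radj A \<circ> A)"
        by (rule bounded_linear_compose[OF bounded_linear_radj[OF A] A, unfolded o_def[symmetric]])
      show "inner ((radj A \<circ> A) x) z = inner x ((radj A \<circ> A) z)" for x z
        by (metis comp_apply inner_radj[OF A] inner_commute)
      show "inner x x \<le> inner ((radj A \<circ> A) x) x" for x
        using power_mono[OF below[of x] norm_ge_zero, of 2]
        by (simp add: inner_radj[OF A] power2_norm_eq_inner)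
    qed (rule bounded_linear_inner_right)
    then show ?thesis unfolding vector_eq_rdot comp_apply by metis
  qed
  then show ?thesis unfolding surj_def by blast
qed

lemma inj_if_bounded_below:
  fixes f :: "'a::real_normed_vector \<Rightarrow> 'b::real_normed_vector"
  assumes "linear f" "\<And>x. norm x \<le> norm (f x)"
  shows "inj f"
  unfolding linear_inj_iff_eq_0[OF assms(1)] using assms(2) by (metis norm_le_zero_iff norm_zero)

lemma radj_isometry:
  fixes V :: "'a::{real_inner,complete_space} \<Rightarrow> 'a"
  assumes V: "bounded_linear V" and iso: "\<And>x. norm (V x) = norm x"
  shows "radj V (V x) = x"
proof (rule radj_eqI[OF V])
  interpret V: bounded_linear V by fact
  fix y
  have "inner (V x) (V y) = ((norm (V x + V y))^2 - (norm (V x))^2 - (norm (V y))^2) / 2"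
    by (rule dot_norm)
  also have "\<dots> = ((norm (x + y))^2 - (norm x)^2 - (norm y)^2) / 2"
    by (simp only: iso V.add[symmetric])
  finally show "inner x y = inner (V x) (V y)" by (simp only: dot_norm[symmetric])
qed

lemma unitary_radj:
  fixes V :: "'a::{real_inner,complete_space} \<Rightarrow> 'a"
  assumes V: "bounded_linear V" and iso: "\<And>x. norm (V x) = norm x" and "surj V"
  shows "V (radj V y) = y"
  using surjD[OF \<open>surj V\<close>, of y] radj_isometry[OF V iso] by auto

lemma adjK_eq_radj:
  fixes S :: "'h::chilbert_space \<times> 'h \<Rightarrow> 'h \<times> 'h"
  assumes "bounded_clinear_opK S"
  shows "adjK S = radj S"
proof -
  have S: "bounded_linear S" and C: "\<And>c p. S (scaleK c p) = scaleK c (S p)"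
    using assms unfolding bounded_clinear_opK_def by auto
  have cinnerK: "cinnerK p q = Complex (inner p q) (inner p (scaleK \<i> q))" for p q :: "'h \<times> 'h"
    by (simp add: cinnerK_def cinner_def scaleK_def inner_prod_def complex_eq_iff)
  show ?thesis unfolding adjK_def
  proof (rule the_equality)
    show "\<forall>p q. cinnerK (radj S p) q = cinnerK p (S q)" by (simp add: cinnerK inner_radj[OF S] C)
    fix S' assume "\<forall>p q. cinnerK (S' p) q = cinnerK p (S q)"
    then have "inner (S' p) q = inner p (S q)" for p q by (metis cinnerK complex.sel(1))
    then show "S' = radj S" by (intro ext radj_eqI[symmetric, OF S]) auto
  qed
qed

lemma adjH_eq_radj:
  fixes S :: "'h::chilbert_space \<Rightarrow> 'h"
  assumes "bounded_clinear_op S"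
  shows "adjH S = radj S"
proof -
  have S: "bounded_linear S" and C: "\<And>c p. S (scaleC c p) = scaleC c (S p)"
    using assms unfolding bounded_clinear_op_def by auto
  show ?thesis unfolding adjH_def
  proof (rule the_equality)
    show "\<forall>p q. cinner (radj S p) q = cinner p (S q)" by (simp add: cinner_def inner_radj[OF S] C)
    fix S' assume "\<forall>p q. cinner (S' p) q = cinner p (S q)"
    then have "inner (S' p) q = inner p (S q)" for p q by (metis cinner_def complex.sel(1))
    then show "S' = radj S" by (intro ext radj_eqI[symmetric, OF S]) auto
  qed
qed

text \<open>For \<open>P = (1 + V) M\<close> with \<open>V\<close> unitary:
  \<open>P (2 M\<^sup>* M)\<^sup>-\<^sup>1 P\<^sup>* = (1 + V) (1 + V\<^sup>*) / 2 = 1 + Re V\<close>.\<close>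

lemma sandwich_inverse_Gram:
  fixes M V :: "'a::{real_inner,complete_space} \<Rightarrow> 'a"
  assumes M: "bounded_linear M" "bij M" and V: "bounded_linear V" "\<And>y. V (radj V y) = y"
  shows "(\<lambda>x. M x + V (M x)) (inv (\<lambda>x. 2 *\<^sub>R radj M (M x)) (radj (\<lambda>x. M x + V (M x)) p))
    = p + (1/2) *\<^sub>R (V p + radj V p)"
proof -
  interpret V: bounded_linear V by fact
  interpret M': bounded_linear "radj M" by (rule bounded_linear_radj[OF M(1)])
  define F where "F x = 2 *\<^sub>R radj M (M x)" for x
  have M_inv: "M (inv M y) = y" for y by (rule surj_f_inv_f[OF bij_is_surj[OF M(2)]])
  have "inj F"
  proof (rule injI)
    fix x y assume "F x = F y"
    then have "inner (M x) (M z) = inner (M y) (M z)" for z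
      by (simp add: F_def flip: inner_radj[OF M(1)])
    then have "M x = M y" using bij_is_surj[OF M(2)] by (metis surjD vector_eq_rdot)
    then show "x = y" using bij_is_inj[OF M(2)] by (simp add: inj_eq)
  qed
  have adj_P: "radj (\<lambda>x. M x + V (M x)) p = radj M (p + radj V p)"
    by (simp add: radj_add radj_comp bounded_linear_compose M(1) V(1) M'.add)
  define w where "w = (1/2) *\<^sub>R (p + radj V p)"
  have "F (inv M w) = radj M (p + radj V p)"
    by (simp add: F_def M_inv w_def M'.scale)
  then have "inv F (radj (\<lambda>x. M x + V (M x)) p) = inv M w"
    using \<open>inj F\<close> by (simp add: adj_P inv_f_eq)
  moreover have "w + V w = p + (1/2) *\<^sub>R (V p + radj V p)"
    by (simp add: w_def V.add V.scale V(2) algebra_simps flip: scaleR_add_left)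
  moreover have "(\<lambda>x. 2 *\<^sub>R radj M (M x)) = F" by (simp add: F_def fun_eq_iff)
  ultimately show ?thesis by (simp add: M_inv)
qed

section \<open>Block operators and \<open>J\<close>-isometries\<close>

lemma blk_decomposition:
  fixes T :: "'a::complex_inner \<times> 'a \<Rightarrow> 'a \<times> 'a"
  assumes "linear T"
  shows "T (x, y) = (blk_a T x + blk_b T y, blk_c T x + blk_d T y)"
proof -
  have "T (x, y) = T (x, 0) + T (0, y)" using linear_add[OF assms, of "(x, 0)" "(0, y)"] by simp
  then show ?thesis by (simp add: blk_a_def blk_b_def blk_c_def blk_d_def prod_eq_iff)
qed

lemma bounded_linear_blk:
  fixes T :: "'a::complex_inner \<times> 'a \<Rightarrow> 'a \<times> 'a"
  assumes T: "bounded_linear T"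
  shows "bounded_linear (blk_a T)" "bounded_linear (blk_b T)"
    and "bounded_linear (blk_c T)" "bounded_linear (blk_d T)"
proof -
  have "bounded_linear (\<lambda>x::'a. T (x, 0))" "bounded_linear (\<lambda>y::'a. T (0, y))"
    by (auto intro!: bounded_linear_compose[OF T] bounded_linear_Pair bounded_linear_ident bounded_linear_zero)
  then show "bounded_linear (blk_a T)" "bounded_linear (blk_b T)"
    and "bounded_linear (blk_c T)" "bounded_linear (blk_d T)"
    unfolding blk_a_def[abs_def] blk_b_def[abs_def] blk_c_def[abs_def] blk_d_def[abs_def]
    by (auto intro: bounded_linear_compose[OF bounded_linear_fst] bounded_linear_compose[OF bounded_linear_snd])
qed

lemma blk_radj:
  fixes T :: "'h::chilbert_space \<times> 'h \<Rightarrow> 'h \<times> 'h"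
  assumes T: "bounded_linear T"
  shows "blk_a (radj T) = radj (blk_a T)" "blk_b (radj T) = radj (blk_c T)"
    and "blk_c (radj T) = radj (blk_b T)" "blk_d (radj T) = radj (blk_d T)"
proof -
  have fst: "inner (fst (radj T p)) y = inner p (T (y, 0))"
    and snd: "inner (snd (radj T p)) y = inner p (T (0, y))" for p y
    using inner_radj[OF T, of p "(y, 0)"] inner_radj[OF T, of p "(0, y)"] by (simp_all add: inner_prod_def)
  show "blk_a (radj T) = radj (blk_a T)" "blk_b (radj T) = radj (blk_c T)"
    and "blk_c (radj T) = radj (blk_b T)" "blk_d (radj T) = radj (blk_d T)"
    by (auto intro!: ext radj_eqI[symmetric] bounded_linear_blk[OF T]
        simp: fst snd inner_prod_def blk_a_def blk_b_def blk_c_def blk_d_def)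
qed

lemma inner_Jop_self: "inner (Jop u) u = (norm (fst u))^2 - (norm (snd u))^2"
  by (cases u) (simp add: Jop_def inner_prod_def power2_norm_eq_inner)

lemma J_isometric_blk_bounded_below:
  fixes S :: "'a::complex_inner \<times> 'a \<Rightarrow> 'a \<times> 'a"
  assumes J_iso: "\<And>x. inner (Jop (S x)) (S x) = inner (Jop x) x"
  shows "norm x \<le> norm (blk_a S x)" "norm y \<le> norm (blk_d S y)"
proof -
  have "(norm (blk_a S x))^2 = (norm x)^2 + (norm (blk_c S x))^2"
    using J_iso[of "(x, 0)"] by (simp add: inner_Jop_self blk_a_def blk_c_def)
  then show "norm x \<le> norm (blk_a S x)" by (smt (verit) power2_le_imp_le zero_le_power2 norm_ge_zero)
  have "(norm (blk_d S y))^2 = (norm y)^2 + (norm (blk_b S y))^2"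
    using J_iso[of "(0, y)"] by (simp add: inner_Jop_self blk_b_def blk_d_def)
  then show "norm y \<le> norm (blk_d S y)" by (smt (verit) power2_le_imp_le zero_le_power2 norm_ge_zero)
qed

lemma J_isometric_if_adj_J:
  fixes T :: "'h::chilbert_space \<times> 'h \<Rightarrow> 'h \<times> 'h"
  assumes T: "bounded_linear T" and adj_J: "\<And>p. radj T (Jop (T p)) = Jop p"
  shows "inner (Jop (T x)) (T x) = inner (Jop x) x"
  using inner_radj[OF T, of "Jop (T x)" x] by (simp add: adj_J)

lemma adj_J_radj_if_surj:
  fixes T :: "'h::chilbert_space \<times> 'h \<Rightarrow> 'h \<times> 'h"
  assumes T: "bounded_linear T" "surj T" and adj_J: "\<And>p. radj T (Jop (T p)) = Jop p"
  shows "radj (radj T) (Jop (radj T r)) = Jop r"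
proof -
  have Jop_Jop: "Jop (Jop q) = q" for q :: "'h \<times> 'h" by (simp add: Jop_def)
  obtain p where "Jop r = T p" using \<open>surj T\<close> by (metis surjD)
  then have "r = Jop (T p)" by (metis Jop_Jop)
  then show ?thesis by (simp add: radj_radj[OF T(1)] adj_J Jop_Jop)
qed

lemma bounded_clinear_op_blk_a:
  fixes T :: "'a::complex_inner \<times> 'a \<Rightarrow> 'a \<times> 'a"
  assumes "bounded_clinear_opK T"
  shows "bounded_clinear_op (blk_a T)"
proof -
  have "scaleC c (0::'a) = 0" for c using scaleC_add_right[of c "0::'a" 0] by simp
  moreover have "T (scaleK c (x, 0)) = scaleK c (T (x, 0))" for c x
    using assms by (simp add: bounded_clinear_opK_def)
  ultimately have "fst (T (scaleC c x, 0)) = scaleC c (fst (T (x, 0)))" for c x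
    by (simp add: scaleK_def)
  with assms show ?thesis
    by (simp add: bounded_clinear_op_def bounded_clinear_opK_def bounded_linear_blk blk_a_def)
qed

section \<open>The Potapov--Ginzburg transform\<close>

text \<open>\<open>V(T)\<close> exchanges the second components of input and output of \<open>T\<close>: it maps
  \<open>pg_input T x = (x\<^sub>1, (T x)\<^sub>2)\<close> to \<open>pg_output T x = ((T x)\<^sub>1, x\<^sub>2)\<close>
  (lemma \<open>Vop_pg_input\<close>).\<close>

definition pg_input :: "('a \<times> 'b \<Rightarrow> 'a \<times> 'b) \<Rightarrow> 'a \<times> 'b \<Rightarrow> 'a \<times> 'b" where
  "pg_input T x = (fst x, snd (T x))"

definition pg_output :: "('a \<times> 'b \<Rightarrow> 'a \<times> 'b) \<Rightarrow> 'a \<times> 'b \<Rightarrow> 'a \<times> 'b" where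
  "pg_output T x = (fst (T x), snd x)"

lemma bounded_clinear_opK_pg:
  fixes T :: "'a::complex_inner \<times> 'a \<Rightarrow> 'a \<times> 'a"
  assumes "bounded_clinear_opK T"
  shows "bounded_clinear_opK (pg_input T)" "bounded_clinear_opK (pg_output T)"
proof -
  have T: "bounded_linear T" and C: "\<And>c p. T (scaleK c p) = scaleK c (T p)"
    using assms by (auto simp: bounded_clinear_opK_def)
  have "bounded_linear (\<lambda>x. (fst x, snd (T x)))" "bounded_linear (\<lambda>x. (fst (T x), snd x))"
    by (auto intro!: bounded_linear_Pair bounded_linear_fst bounded_linear_snd
        bounded_linear_compose[OF bounded_linear_fst T] bounded_linear_compose[OF bounded_linear_snd T])
  moreover have "pg_input T = (\<lambda>x. (fst x, snd (T x)))" "pg_output T = (\<lambda>x. (fst (T x), snd x))"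
    by (simp_all add: fun_eq_iff pg_input_def pg_output_def)
  moreover have "T (scaleC c a, scaleC c b) = scaleK c (T (a, b))" for c a b
    using C[of c "(a, b)"] by (simp add: scaleK_def)
  ultimately show "bounded_clinear_opK (pg_input T)" "bounded_clinear_opK (pg_output T)"
    by (simp_all add: bounded_clinear_opK_def scaleK_def)
qed

lemma isometric_factor_bounded_clinear:
  fixes M N V :: "'a::complex_inner \<times> 'a \<Rightarrow> 'a \<times> 'a"
  assumes M: "bounded_clinear_opK M" "surj M" and N: "bounded_clinear_opK N"
    and factor: "\<And>x. V (M x) = N x" and iso: "\<And>x. norm (N x) = norm (M x)"
  shows "bounded_clinear_opK V" "\<And>p. norm (V p) = norm p"
proof -
  interpret M: bounded_linear M using M(1) by (simp add: bounded_clinear_opK_def)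
  interpret N: bounded_linear N using N by (simp add: bounded_clinear_opK_def)
  have pre: "\<exists>x. p = M x" for p using \<open>surj M\<close> by (metis surjD)
  show norm: "norm (V p) = norm p" for p using pre[of p] factor iso by auto
  have "V (p + q) = V p + V q" for p q
    using pre[of p] pre[of q] by (metis factor N.add M.add)
  moreover have "V (r *\<^sub>R p) = r *\<^sub>R V p" for r p
    using pre[of p] by (metis factor N.scale M.scale)
  moreover have "V (scaleK c p) = scaleK c (V p)" for c p
  proof -
    have "M (scaleK c x) = scaleK c (M x)" "N (scaleK c x) = scaleK c (N x)" for x
      using M(1) N unfolding bounded_clinear_opK_def by blast+
    then show ?thesis using pre[of p] factor by metis
  qed
  ultimately show "bounded_clinear_opK V"
    unfolding bounded_clinear_opK_def by (auto intro!: bounded_linear_intro[where K=1] simp: norm)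
qed

locale J_unitary_op =
  fixes T :: "'h::chilbert_space \<times> 'h \<Rightarrow> 'h \<times> 'h"
  assumes J_unitary: "J_unitary T"
begin

lemma T_bounded_clinear: "bounded_clinear_opK T"
  using J_unitary by (simp add: J_unitary_def)

lemma T_bounded_linear: "bounded_linear T"
  using T_bounded_clinear by (simp add: bounded_clinear_opK_def)

lemma adjK_T: "adjK T = radj T"
  by (rule adjK_eq_radj[OF T_bounded_clinear])

lemma adj_J: "radj T (Jop (T p)) = Jop p"
  using J_unitary by (metis J_unitary_def adjK_T comp_apply)

lemma J_isometric: "inner (Jop (T x)) (T x) = inner (Jop x) x"
  by (rule J_isometric_if_adj_J[OF T_bounded_linear adj_J])

lemma T_blk: "T (x, y) = (blk_a T x + blk_b T y, blk_c T x + blk_d T y)"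
  by (rule blk_decomposition[OF bounded_linear.linear[OF T_bounded_linear]])

lemma blk_bounded_below:
  "norm x \<le> norm (blk_a T x)" "norm x \<le> norm (blk_d T x)"
  "norm x \<le> norm (radj (blk_a T) x)" "norm x \<le> norm (radj (blk_d T) x)"
proof -
  have "surj T" using J_unitary by (simp add: J_unitary_def bij_is_surj)
  note adj_J_iso = J_isometric_if_adj_J[OF bounded_linear_radj[OF T_bounded_linear]
      adj_J_radj_if_surj[OF T_bounded_linear \<open>surj T\<close> adj_J]]
  show "norm x \<le> norm (blk_a T x)" "norm x \<le> norm (blk_d T x)"
    by (rule J_isometric_blk_bounded_below[OF J_isometric])+
  show "norm x \<le> norm (radj (blk_a T) x)" "norm x \<le> norm (radj (blk_d T) x)"
    using J_isometric_blk_bounded_below[OF adj_J_iso] by (simp_all add: blk_radj[OF T_bounded_linear])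
qed

lemma blk_d_bij: "bij (blk_d T)"
proof (rule bijI)
  note d = bounded_linear_blk(4)[OF T_bounded_linear]
  show "inj (blk_d T)"
    by (rule inj_if_bounded_below[OF bounded_linear.linear[OF d] blk_bounded_below(2)])
  show "surj (blk_d T)"
    using surj_radj_if_bounded_below[OF bounded_linear_radj[OF d] blk_bounded_below(4)]
    by (simp add: radj_radj[OF d])
qed

lemma blk_a_surj: "surj (blk_a T)"
proof -
  note a = bounded_linear_blk(1)[OF T_bounded_linear]
  show ?thesis
    using surj_radj_if_bounded_below[OF bounded_linear_radj[OF a] blk_bounded_below(3)]
    by (simp add: radj_radj[OF a])
qed

lemma radj_blk_a_inj: "inj (radj (blk_a T))"
  by (rule inj_if_bounded_below[OF bounded_linear.linear blk_bounded_below(3)])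
    (rule bounded_linear_radj[OF bounded_linear_blk(1)[OF T_bounded_linear]])

lemma adj_blk_first_row:
  "radj (blk_a T) (blk_a T x) - radj (blk_c T) (blk_c T x) = x"
  "radj (blk_a T) (blk_b T y) - radj (blk_c T) (blk_d T y) = 0"
proof -
  interpret c': bounded_linear "radj (blk_c T)"
    by (rule bounded_linear_radj[OF bounded_linear_blk(3)[OF T_bounded_linear]])
  have fst_radj: "fst (radj T (u, v)) = radj (blk_a T) u + radj (blk_c T) v" for u v
    using blk_decomposition[OF bounded_linear.linear[OF bounded_linear_radj[OF T_bounded_linear]]]
    by (simp add: blk_radj[OF T_bounded_linear])
  have "T (x, 0) = (blk_a T x, blk_c T x)" "T (0, y) = (blk_b T y, blk_d T y)"
    by (simp_all add: blk_a_def blk_b_def blk_c_def blk_d_def)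
  then have "fst (radj T (blk_a T x, - blk_c T x)) = x" "fst (radj T (blk_b T y, - blk_d T y)) = 0"
    using adj_J[of "(x, 0)"] adj_J[of "(0, y)"] by (simp_all add: Jop_def)
  then show "radj (blk_a T) (blk_a T x) - radj (blk_c T) (blk_c T x) = x"
    "radj (blk_a T) (blk_b T y) - radj (blk_c T) (blk_d T y) = 0"
    by (simp_all only: fst_radj c'.neg diff_conv_add_uminus)
qed

lemma pg_input_bij: "bij (pg_input T)"
proof (rule bijI)
  show "inj (pg_input T)"
  proof (rule injI)
    fix x y :: "'h \<times> 'h"
    assume eq: "pg_input T x = pg_input T y"
    obtain x1 x2 y1 y2 where xy: "x = (x1, x2)" "y = (y1, y2)" by fastforce
    from eq have "x1 = y1" "blk_c T x1 + blk_d T x2 = blk_c T y1 + blk_d T y2"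
      by (auto simp: xy pg_input_def T_blk)
    then have "x2 = y2" using bij_is_inj[OF blk_d_bij] by (simp add: inj_eq)
    with \<open>x1 = y1\<close> show "x = y" by (simp add: xy)
  qed
  show "surj (pg_input T)"
  proof (rule surjI)
    fix w :: "'h \<times> 'h"
    show "pg_input T (fst w, inv (blk_d T) (snd w - blk_c T (fst w))) = w"
      by (simp add: pg_input_def T_blk surj_f_inv_f[OF bij_is_surj[OF blk_d_bij]])
  qed
qed

lemma Vop_pg_input: "Vop T (pg_input T x) = pg_output T x"
proof (cases x)
  case (Pair x1 x2)
  interpret b: bounded_linear "blk_b T" by (rule bounded_linear_blk(2)[OF T_bounded_linear])
  interpret d: bounded_linear "blk_d T" by (rule bounded_linear_blk(4)[OF T_bounded_linear])
  interpret a': bounded_linear "radj (blk_a T)"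
    by (rule bounded_linear_radj[OF bounded_linear_blk(1)[OF T_bounded_linear]])
  interpret c': bounded_linear "radj (blk_c T)"
    by (rule bounded_linear_radj[OF bounded_linear_blk(3)[OF T_bounded_linear]])
  define v where "v = inv (blk_d T) (blk_c T x1)"
  have d_v: "blk_d T v = blk_c T x1"
    unfolding v_def by (rule surj_f_inv_f[OF bij_is_surj[OF blk_d_bij]])
  have "inv (blk_d T) (blk_c T x1 + blk_d T x2) = v + x2"
    using inv_f_f[OF bij_is_inj[OF blk_d_bij]] by (metis d.add d_v)
  moreover have "radj (blk_a T) (blk_a T x1 - blk_b T v) = x1"
    using adj_blk_first_row(1)[of x1] adj_blk_first_row(2)[of v] by (simp add: a'.diff d_v)
  then have "inv (adjH (blk_a T)) x1 = blk_a T x1 - blk_b T v"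
    by (simp add: adjH_eq_radj[OF bounded_clinear_op_blk_a[OF T_bounded_clinear]]
        inv_f_eq[OF radj_blk_a_inj])
  ultimately show ?thesis
    by (simp add: Pair Vop_def pg_input_def pg_output_def T_blk b.add v_def[symmetric])
qed

lemma norm_pg_output: "norm (pg_output T x) = norm (pg_input T x)"
proof -
  have "(norm (pg_output T x))^2 = (norm (pg_input T x))^2"
    using J_isometric[of x] by (simp add: inner_Jop_self pg_input_def pg_output_def norm_Pair)
  then show ?thesis by (simp add: power2_eq_iff_nonneg)
qed

lemma Vop_bounded_clinear: "bounded_clinear_opK (Vop T)"
  and Vop_norm: "norm (Vop T p) = norm p"
  using isometric_factor_bounded_clinear[OF bounded_clinear_opK_pg(1)[OF T_bounded_clinear]
      bij_is_surj[OF pg_input_bij] bounded_clinear_opK_pg(2)[OF T_bounded_clinear]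
      Vop_pg_input norm_pg_output] by auto

lemma Vop_surj: "surj (Vop T)"
proof (rule surjI)
  fix y :: "'h \<times> 'h"
  define x1 where "x1 = inv (blk_a T) (fst y - blk_b T (snd y))"
  have "blk_a T x1 = fst y - blk_b T (snd y)"
    unfolding x1_def by (rule surj_f_inv_f[OF blk_a_surj])
  then show "Vop T (pg_input T (x1, snd y)) = y"
    by (simp add: Vop_pg_input pg_output_def T_blk)
qed

lemma radj_pg_input: "radj (pg_input T) w = (fst w, 0) + radj T (0, snd w)"
proof (rule radj_eqI)
  show "bounded_linear (pg_input T)"
    using bounded_clinear_opK_pg(1)[OF T_bounded_clinear] by (simp add: bounded_clinear_opK_def)
  show "inner ((fst w, 0) + radj T (0, snd w)) y = inner w (pg_input T y)" for y
    unfolding inner_add_left inner_radj[OF T_bounded_linear] by (simp add: inner_prod_def pg_input_def)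
qed

lemma plus_T_bounded_clinear: "bounded_clinear_opK (\<lambda>q. q + T q)"
  using T_bounded_clinear
  by (auto simp: bounded_clinear_opK_def scaleK_def scaleC_add_right intro: bounded_linear_add bounded_linear_ident)

lemma plus_T_eq: "(\<lambda>q. q + T q) = (\<lambda>x. pg_input T x + Vop T (pg_input T x))"
  unfolding Vop_pg_input by (simp add: fun_eq_iff pg_input_def pg_output_def prod_eq_iff add.commute)

text \<open>\<open>T\<^sup>* J T = J\<close> turns \<open>1 + T\<^sup>* T\<close> into the Gram operator \<open>2 M\<^sup>* M\<close> of \<open>M = pg_input T\<close>.\<close>

lemma plus_adj_T_T_eq: "(\<lambda>q. q + radj T (T q)) = (\<lambda>x. 2 *\<^sub>R radj (pg_input T) (pg_input T x))"
proof
  interpret T': bounded_linear "radj T" by (rule bounded_linear_radj[OF T_bounded_linear])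
  fix x
  have "T x = Jop (T x) + 2 *\<^sub>R (0, snd (T x))" by (simp add: Jop_def prod_eq_iff scaleR_2)
  then have "radj T (T x) = Jop x + 2 *\<^sub>R radj T (0, snd (T x))"
    by (metis adj_J T'.add T'.scale)
  then show "x + radj T (T x) = 2 *\<^sub>R radj (pg_input T) (pg_input T x)"
    by (simp add: radj_pg_input pg_input_def Jop_def prod_eq_iff scaleR_add_right scaleR_2)
qed

end

theorem proposition3p21:
  fixes T :: "'h::chilbert_space \<times> 'h \<Rightarrow> 'h \<times> 'h"
  assumes separable: "\<exists>D::'h set. countable D \<and> closure D = UNIV"
    and JU: "J_unitary T"
  shows "ReK (Vop T) =
    (\<lambda>p. ((\<lambda>q. q + T q) \<circ> inv (\<lambda>q. q + adjK T (T q)) \<circ> adjK (\<lambda>q. q + T q)) p - p)"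
proof -
  interpret J_unitary_op T by (rule J_unitary_op.intro[OF JU])
  have V: "bounded_linear (Vop T)" "adjK (Vop T) = radj (Vop T)"
    using Vop_bounded_clinear adjK_eq_radj by (auto simp: bounded_clinear_opK_def)
  have M: "bounded_linear (pg_input T)"
    using bounded_clinear_opK_pg(1)[OF T_bounded_clinear] by (simp add: bounded_clinear_opK_def)
  have "((\<lambda>q. q + T q) \<circ> inv (\<lambda>q. q + adjK T (T q)) \<circ> adjK (\<lambda>q. q + T q)) p
      = p + (1/2) *\<^sub>R (Vop T p + radj (Vop T) p)" for p
    unfolding adjK_eq_radj[OF plus_T_bounded_clinear] adjK_T
    unfolding plus_adj_T_T_eq plus_T_eq comp_apply
    by (rule sandwich_inverse_Gram[OF M pg_input_bij V(1) unitary_radj[OF V(1) Vop_norm Vop_surj]])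
  then show ?thesis by (simp add: ReK_def fun_eq_iff V(2))
qed

end
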